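(* For $n\ge1$, let $X_n$ be the degree of symmetry of a uniformly random binary tree with $n$ nodes. Then $X_n$ converges to a discrete limit law with $$\lim_{n\to\infty}\Pr(X_n=k)=\frac12\binom{2k}{k}\left(\frac{3}{16}\right)^k\quad\text{for all }k\ge0,$$ and $\mathbb{E}X_n=\frac32+o(1)$, $\mathbb{V}X_n=6+o(1)$.
   Context: A binary tree is a rooted tree in which each node has at most two children, distinguished as left and right. The address of a node is the word over $\{L,R\}$ recording the left/right steps from the root to it; its complement swaps $L$ and $R$. Two nodes are mirror images if their addresses are complements of each other. The degree of symmetry $\mathrm{ds}(T)$ is the number of unordered pairs of distinct nodes (hence not involving the root) that are mirror images of each other. *)

theory Defs
  imports Complex_Main
begin

datatype bt = Leaf | Node bt bt

fun nodes :: "bt \<Rightarrow> nat" where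
  "nodes Leaf = 0"
| "nodes (Node l r) = Suc (nodes l + nodes r)"

datatype dir = L | R

fun flip :: "dir \<Rightarrow> dir" where
  "flip L = R"
| "flip R = L"

definition compl :: "dir list \<Rightarrow> dir list" where
  "compl w = map flip w"

fun addrs :: "bt \<Rightarrow> dir list set" where
  "addrs Leaf = {}"
| "addrs (Node l r) = {[]} \<union> (\<lambda>w. L # w) ` addrs l \<union> (\<lambda>w. R # w) ` addrs r"

definition ds :: "bt \<Rightarrow> nat" where
  "ds t = card {{u, v} | u v. u \<in> addrs t \<and> v \<in> addrs t \<and> u \<noteq> v \<and> v = compl u}"

definition trees :: "nat \<Rightarrow> bt set" where
  "trees n = {t. nodes t = n}"

definition prob_ds :: "nat \<Rightarrow> nat \<Rightarrow> real" where
  "prob_ds n k = real (card {t \<in> trees n. ds t = k}) / real (card (trees n))"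

definition exp_ds :: "nat \<Rightarrow> real" where
  "exp_ds n = (\<Sum>t\<in>trees n. real (ds t)) / real (card (trees n))"

definition var_ds :: "nat \<Rightarrow> real" where
  "var_ds n = (\<Sum>t\<in>trees n. (real (ds t) - exp_ds n)^2) / real (card (trees n))"

end

theory Submission
  imports Defs "HOL-Computational_Algebra.Formal_Power_Series" "HOL-Real_Asymp.Real_Asymp"
    "HOL-Analysis.Uniform_Limit"
begin

(* Removing the root, ds (Node l r) is the number of nodes common to l and mirror r, so X_(n+1) is
   the overlap of a uniformly random pair of trees with n nodes in total. A pair with overlap k
   consists of its common part, a tree with k nodes, and k + 1 pairs of overlap 0 hanging at the
   external positions of the common part. With B = 1 + x B^2 counting trees and A = 2 B - 1 counting
   pairs of overlap 0, the pairs of overlap k have generating function C_k x^(2k) A^(k+1), C_k the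
   Catalan numbers. The coefficients of B^r are ballot numbers, so [x^q] B^r / C_q -> r 2^(r-1) and
   C_q / C_(q+d) -> 4^(-d); expanding A^(k+1) binomially gives the limit law. A bound
   P(X_n = k) <= c k^3 (3/4)^k, uniform in n, lets Tannery's theorem pass the first two moments to
   the limit, where they follow from the recurrence 8 (k+1) p_(k+1) = 3 (2k+1) p_k. *)

section \<open>Degree of symmetry as an overlap\<close>

lemma compl_Nil [simp]: "compl [] = []"
  and compl_Cons [simp]: "compl (x # w) = flip x # compl w"
  by (simp_all add: compl_def)

lemma flip_flip [simp]: "flip (flip x) = x"
  by (cases x) auto

lemma compl_compl [simp]: "compl (compl w) = w"
  by (induction w) auto

lemma in_compl_image_iff [simp]: "w \<in> compl ` A \<longleftrightarrow> compl w \<in> A"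
  by (metis compl_compl image_iff)

lemma finite_addrs [simp]: "finite (addrs t)"
  by (induction t) auto

fun mirror :: "bt \<Rightarrow> bt" where
  "mirror Leaf = Leaf"
| "mirror (Node l r) = Node (mirror r) (mirror l)"

lemma mirror_mirror [simp]: "mirror (mirror t) = t"
  by (induction t) auto

lemma nodes_mirror [simp]: "nodes (mirror t) = nodes t"
  by (induction t) auto

lemma addrs_mirror: "addrs (mirror t) = compl ` addrs t"
  by (induction t) (simp_all add: image_Un image_image Un_ac)

fun overlap :: "bt \<Rightarrow> bt \<Rightarrow> nat" where
  "overlap (Node a1 a2) (Node b1 b2) = Suc (overlap a1 b1 + overlap a2 b2)"
| "overlap _ _ = 0"

lemma overlap_le_nodes: "overlap a b \<le> nodes a"
  by (induction a b rule: overlap.induct) auto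

lemma overlap_eq_0_iff: "overlap a b = 0 \<longleftrightarrow> a = Leaf \<or> b = Leaf"
  by (cases a; cases b) auto

lemma card_addrs_Int: "card (addrs a \<inter> addrs b) = overlap a b"
proof (induction a b rule: overlap.induct)
  case (1 a1 a2 b1 b2)
  have "addrs (Node a1 a2) \<inter> addrs (Node b1 b2) =
     insert [] ((\<lambda>w. L # w) ` (addrs a1 \<inter> addrs b1) \<union> (\<lambda>w. R # w) ` (addrs a2 \<inter> addrs b2))"
    by auto
  then have "card (addrs (Node a1 a2) \<inter> addrs (Node b1 b2)) =
     Suc (card ((\<lambda>w. L # w) ` (addrs a1 \<inter> addrs b1)) + card ((\<lambda>w. R # w) ` (addrs a2 \<inter> addrs b2)))"
    by (simp only:) (subst card_insert_disjoint, auto intro!: card_Un_disjoint)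
  then show ?case
    using 1 by (simp add: card_image)
qed auto

lemma mirror_pairs_Node:
  "{{u, v} | u v. u \<in> addrs (Node l r) \<and> v \<in> addrs (Node l r) \<and> u \<noteq> v \<and> v = compl u} =
   (\<lambda>w. {L # w, R # compl w}) ` (addrs l \<inter> addrs (mirror r))"
    (is "?S = ?f ` ?A")
proof (rule set_eqI, rule iffI)
  fix x assume "x \<in> ?S"
  then obtain u where u: "u \<in> addrs (Node l r)" "compl u \<in> addrs (Node l r)" "u \<noteq> compl u"
    "x = {u, compl u}" by blast
  then obtain d w where "u = d # w"
    by (cases u) auto
  show "x \<in> ?f ` ?A"
  proof (cases d)
    case L
    with u \<open>u = d # w\<close> have "w \<in> ?A" "x = ?f w"
      by (auto simp: addrs_mirror)
    then show ?thesis by blast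
  next
    case R
    with u \<open>u = d # w\<close> have "compl w \<in> ?A" "x = ?f (compl w)"
      by (auto simp: addrs_mirror)
    then show ?thesis by blast
  qed
next
  fix x assume "x \<in> ?f ` ?A"
  then obtain w where "w \<in> addrs l" "compl w \<in> addrs r" "x = ?f w"
    by (auto simp: addrs_mirror)
  then show "x \<in> ?S"
    by (intro CollectI exI[of _ "L # w"] exI[of _ "R # compl w"]) simp
qed

lemma ds_Node: "ds (Node l r) = overlap l (mirror r)"
proof -
  have "inj_on (\<lambda>w. {L # w, R # compl w}) (addrs l \<inter> addrs (mirror r))"
    by (rule inj_onI) (auto simp: doubleton_eq_iff)
  then show ?thesis
    unfolding ds_def mirror_pairs_Node by (simp add: card_image card_addrs_Int)
qed

lemma ds_Leaf [simp]: "ds Leaf = 0"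
  by (simp add: ds_def)

lemma ds_le_nodes: "ds t \<le> nodes t"
  by (cases t) (auto simp: ds_Node intro: le_SucI le_trans[OF overlap_le_nodes])

section \<open>Counting trees and pairs of trees\<close>

definition num_trees :: "nat \<Rightarrow> nat" where
  "num_trees n = card (trees n)"

lemma trees_0: "trees 0 = {Leaf}"
  by (auto simp: trees_def elim: nodes.elims)

lemma trees_Suc: "trees (Suc n) = (\<lambda>(a, b). Node a b) ` (\<Union>j\<le>n. trees j \<times> trees (n - j))"
proof (rule set_eqI, rule iffI)
  fix t assume "t \<in> trees (Suc n)"
  then obtain a b where "t = Node a b" "nodes a + nodes b = n"
    by (cases t) (auto simp: trees_def)
  then show "t \<in> (\<lambda>(a, b). Node a b) ` (\<Union>j\<le>n. trees j \<times> trees (n - j))"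
    by (auto simp: trees_def intro!: image_eqI[of _ _ "(a, b)"])
qed (auto simp: trees_def)

lemma finite_trees [simp]: "finite (trees n)"
proof (induction n rule: less_induct)
  case (less n)
  show ?case
  proof (cases n)
    case (Suc m)
    have "finite (trees j \<times> trees (m - j))" if "j \<le> m" for j
      using less Suc that by (intro finite_cartesian_product) auto
    then show ?thesis using Suc by (simp add: trees_Suc)
  qed (simp add: trees_0)
qed

lemma num_trees_0 [simp]: "num_trees 0 = 1"
  by (simp add: num_trees_def trees_0)

lemma num_trees_Suc: "num_trees (Suc n) = (\<Sum>j\<le>n. num_trees j * num_trees (n - j))"
proof -
  have "inj_on (\<lambda>(a, b). Node a b) (\<Union>j\<le>n. trees j \<times> trees (n - j))"
    by (auto intro!: inj_onI)
  then have "num_trees (Suc n) = card (\<Union>j\<le>n. trees j \<times> trees (n - j))"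
    by (simp add: num_trees_def trees_Suc card_image)
  also have "\<dots> = (\<Sum>j\<le>n. card (trees j \<times> trees (n - j)))"
    by (rule card_UN_disjoint) (simp, simp, auto simp: trees_def)
  finally show ?thesis
    by (simp add: num_trees_def card_cartesian_product)
qed

lemma num_trees_neq_0 [simp]: "num_trees n \<noteq> 0"
proof (induction n)
  case (Suc n)
  have "num_trees 0 * num_trees (n - 0) \<le> (\<Sum>j\<le>n. num_trees j * num_trees (n - j))"
    by (rule member_le_sum) auto
  then have "num_trees n \<le> num_trees (Suc n)"
    by (simp add: num_trees_Suc)
  with Suc show ?case
    by simp
qed simp

definition overlap_pairs :: "nat \<Rightarrow> nat \<Rightarrow> (bt \<times> bt) set" where
  "overlap_pairs n k = {(a, b). nodes a + nodes b = n \<and> overlap a b = k}"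

lemma finite_overlap_pairs [simp]: "finite (overlap_pairs n k)"
proof (rule finite_subset)
  show "overlap_pairs n k \<subseteq> (\<Union>j\<le>n. trees j \<times> trees (n - j))"
    by (auto simp: overlap_pairs_def trees_def)
qed auto

lemma card_ds_eq_card_overlap_pairs:
  "card {t \<in> trees (Suc n). ds t = k} = card (overlap_pairs n k)"
proof -
  have "{t \<in> trees (Suc n). ds t = k} = (\<lambda>(a, b). Node a (mirror b)) ` overlap_pairs n k"
  proof (rule set_eqI, rule iffI)
    fix t assume "t \<in> {t \<in> trees (Suc n). ds t = k}"
    then obtain a b where "t = Node a b" "nodes a + nodes b = n" "overlap a (mirror b) = k"
      by (cases t) (auto simp: trees_def ds_Node)
    then show "t \<in> (\<lambda>(a, b). Node a (mirror b)) ` overlap_pairs n k"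
      by (auto simp: overlap_pairs_def intro!: image_eqI[of _ _ "(a, mirror b)"])
  qed (auto simp: trees_def ds_Node overlap_pairs_def)
  moreover have "inj_on (\<lambda>(a, b). Node a (mirror b)) (overlap_pairs n k)"
    by (auto intro!: inj_onI) (metis mirror_mirror)
  ultimately show ?thesis
    by (simp add: card_image)
qed

lemma card_overlap_pairs_0:
  "real (card (overlap_pairs n 0)) = 2 * real (num_trees n) - (if n = 0 then 1 else 0)"
proof -
  let ?A = "(\<lambda>b. (Leaf, b)) ` trees n" and ?B = "(\<lambda>a. (a, Leaf)) ` trees n"
  have "overlap_pairs n 0 = ?A \<union> ?B"
    by (auto simp: overlap_pairs_def trees_def overlap_eq_0_iff)
  then have "card ?A + card ?B = card (overlap_pairs n 0) + card (?A \<inter> ?B)"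
    by (simp only:) (rule card_Un_Int; simp)
  moreover have "?A \<inter> ?B = (if n = 0 then {(Leaf, Leaf)} else {})"
    by (auto simp: trees_def)
  moreover have "card ?A = num_trees n" "card ?B = num_trees n"
    by (auto simp: num_trees_def card_image inj_on_def)
  ultimately show ?thesis
    by (cases "n = 0") simp_all
qed

lemma overlap_pairs_Suc_eq_empty: "n < 2 \<Longrightarrow> overlap_pairs n (Suc k) = {}"
  by (auto simp: overlap_pairs_def elim!: overlap.elims)

lemma overlap_pairs_Suc_Suc:
  "overlap_pairs (Suc (Suc m)) (Suc k) =
     (\<lambda>((a1, b1), (a2, b2)). (Node a1 a2, Node b1 b2)) `
       (\<Union>(j, i)\<in>{..k} \<times> {..m}. overlap_pairs i j \<times> overlap_pairs (m - i) (k - j))"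
proof (rule set_eqI, rule iffI)
  fix x assume "x \<in> overlap_pairs (Suc (Suc m)) (Suc k)"
  then obtain a1 a2 b1 b2 where x: "x = (Node a1 a2, Node b1 b2)"
     "nodes a1 + nodes a2 + nodes b1 + nodes b2 = m" "overlap a1 b1 + overlap a2 b2 = k"
    by (auto simp: overlap_pairs_def elim!: overlap.elims)
  then show "x \<in> (\<lambda>((a1, b1), (a2, b2)). (Node a1 a2, Node b1 b2)) `
       (\<Union>(j, i)\<in>{..k} \<times> {..m}. overlap_pairs i j \<times> overlap_pairs (m - i) (k - j))"
    by (auto simp: overlap_pairs_def intro!: image_eqI[of _ _ "((a1, b1), (a2, b2))"]
        bexI[of _ "(overlap a1 b1, nodes a1 + nodes b1)"])
qed (auto simp: overlap_pairs_def)

lemma card_overlap_pairs_Suc_Suc: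
  "card (overlap_pairs (Suc (Suc m)) (Suc k)) =
     (\<Sum>j\<le>k. \<Sum>i\<le>m. card (overlap_pairs i j) * card (overlap_pairs (m - i) (k - j)))"
proof -
  let ?U = "\<Union>(j, i)\<in>{..k} \<times> {..m}. overlap_pairs i j \<times> overlap_pairs (m - i) (k - j)"
  have "inj_on (\<lambda>((a1, b1), (a2, b2)). (Node a1 a2, Node b1 b2)) ?U"
    by (auto intro!: inj_onI)
  then have "card (overlap_pairs (Suc (Suc m)) (Suc k)) = card ?U"
    by (simp add: overlap_pairs_Suc_Suc card_image)
  also have "\<dots> = (\<Sum>(j, i)\<in>{..k} \<times> {..m}. card (overlap_pairs i j \<times> overlap_pairs (m - i) (k - j)))"
    by (subst card_UN_disjoint) (simp, simp, auto simp: overlap_pairs_def case_prod_unfold)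
  finally show ?thesis
    by (simp add: sum.cartesian_product[symmetric] card_cartesian_product)
qed

section \<open>Generating functions\<close>

definition tree_gf :: "real fps" where
  "tree_gf = Abs_fps (\<lambda>n. real (num_trees n))"

lemma fps_nth_tree_gf [simp]: "fps_nth tree_gf n = real (num_trees n)"
  by (simp add: tree_gf_def)

lemma tree_gf_eq: "tree_gf = 1 + fps_X * tree_gf ^ 2"
proof (rule fps_ext)
  fix n show "fps_nth tree_gf n = fps_nth (1 + fps_X * tree_gf ^ 2) n"
  proof (cases n)
    case (Suc m)
    have "fps_nth (fps_X * tree_gf ^ 2) n = fps_nth (tree_gf * tree_gf) m"
      using Suc by (simp add: power2_eq_square)
    also have "\<dots> = (\<Sum>j\<le>m. real (num_trees j) * real (num_trees (m - j)))"
      by (simp add: fps_mult_nth atLeast0AtMost)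
    finally show ?thesis
      using Suc by (simp add: num_trees_Suc)
  qed simp
qed

lemma fps_nth_tree_gf_square: "fps_nth (tree_gf ^ 2) m = real (num_trees (Suc m))"
proof -
  have "real (num_trees (Suc m)) = fps_nth (1 + fps_X * tree_gf ^ 2) (Suc m)"
    by (subst tree_gf_eq[symmetric]) simp
  then show ?thesis
    by simp
qed

definition forest_count :: "nat \<Rightarrow> nat \<Rightarrow> real" where
  "forest_count r q = fps_nth (tree_gf ^ r) q"

lemma forest_count_0_right [simp]: "forest_count r 0 = 1"
  by (simp add: forest_count_def fps_power_zeroth)

lemma forest_count_0_Suc [simp]: "forest_count 0 (Suc q) = 0"
  by (simp add: forest_count_def)

lemma forest_count_1 [simp]: "forest_count 1 q = real (num_trees q)"
  by (simp add: forest_count_def)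

lemma forest_count_Suc_Suc:
  "forest_count (Suc r) (Suc q) = forest_count r (Suc q) + forest_count (Suc (Suc r)) q"
proof -
  have "tree_gf ^ Suc r = tree_gf ^ r * (1 + fps_X * tree_gf ^ 2)"
    by (metis power_Suc2 tree_gf_eq)
  also have "\<dots> = tree_gf ^ r + fps_X * tree_gf ^ Suc (Suc r)"
    by (simp add: algebra_simps power2_eq_square)
  finally show ?thesis
    by (simp add: forest_count_def del: power_Suc)
qed

definition ballot :: "nat \<Rightarrow> nat \<Rightarrow> real" where
  "ballot r q = real r * fact (2 * q + r - 1) / (fact q * fact (q + r))"

lemma ballot_0_left [simp]: "ballot 0 q = 0"
  by (simp add: ballot_def)

lemma ballot_Suc_0 [simp]: "ballot (Suc r) 0 = 1"
  by (simp add: ballot_def fact_Suc)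

lemma ballot_Suc_Suc: "ballot (Suc r) (Suc q) = ballot r (Suc q) + ballot (Suc (Suc r)) q"
proof -
  have "2 * Suc q + Suc r - 1 = Suc (2 * q + r + 1)" "2 * Suc q + r - 1 = 2 * q + r + 1"
    "2 * q + Suc (Suc r) - 1 = 2 * q + r + 1" "Suc q + Suc r = Suc (q + r + 1)"
    "Suc q + r = q + r + 1" "q + Suc (Suc r) = Suc (q + r + 1)"
    by simp_all
  then show ?thesis
    unfolding ballot_def fact_Suc
    by (simp add: add_frac_eq frac_eq_eq del: divide_const_simps; simp add: algebra_simps)
qed

lemma forest_count_eq_ballot: "0 < r \<or> 0 < q \<Longrightarrow> forest_count r q = ballot r q"
proof (induction q arbitrary: r)
  case 0
  then show ?case
    by (cases r) simp_all
next
  case (Suc q)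
  note forest_count_eq = Suc.IH
  show ?case
  proof (induction r)
    case (Suc r)
    have "forest_count (Suc (Suc r)) q = ballot (Suc (Suc r)) q"
      by (rule forest_count_eq) simp
    with Suc.IH show ?case
      by (simp add: forest_count_Suc_Suc ballot_Suc_Suc)
  qed simp
qed

lemma forest_count_nonneg: "forest_count r q \<ge> 0"
  by (cases r; cases q) (simp_all add: forest_count_eq_ballot ballot_def)

lemma num_trees_closed: "real (num_trees q) = fact (2 * q) / (fact q * fact (Suc q))"
proof -
  have "real (num_trees q) = ballot 1 q"
    by (metis forest_count_1 forest_count_eq_ballot zero_less_one)
  then show ?thesis
    by (simp add: ballot_def del: fact_Suc)
qed

lemma num_trees_Suc_ratio:
  "real (num_trees (Suc q)) * (real q + 2) = 2 * (2 * real q + 1) * real (num_trees q)"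
proof -
  have "2 * Suc q = Suc (Suc (2 * q))"
    by simp
  then show ?thesis
    unfolding num_trees_closed fact_Suc
    by (simp add: add_frac_eq frac_eq_eq del: divide_const_simps; simp add: algebra_simps)
qed

lemma num_trees_central_binomial: "real (num_trees k) * (real k + 1) = real ((2 * k) choose k)"
proof -
  have "real ((2 * k) choose k) = fact (2 * k) / (fact k * fact k)"
    by (simp add: binomial_fact)
  then show ?thesis
    unfolding num_trees_closed fact_Suc
    by (simp add: add_frac_eq frac_eq_eq del: divide_const_simps; simp add: algebra_simps)
qed

lemma forest_count_Suc_Suc_ratio:
  "forest_count (Suc (Suc s)) q * (real (s + 1) * real (q + s + 2)) =
     real (s + 2) * real (2 * q + s + 1) * forest_count (Suc s) q"
proof -
  have "2 * q + Suc (Suc s) - 1 = Suc (2 * q + s)" "q + Suc (Suc s) = Suc (q + s + 1)"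
    "2 * q + Suc s - 1 = 2 * q + s" "q + Suc s = q + s + 1"
    by simp_all
  then show ?thesis
    unfolding forest_count_eq_ballot[OF disjI1, OF zero_less_Suc] ballot_def fact_Suc
    by (simp add: add_frac_eq frac_eq_eq del: divide_const_simps; simp add: algebra_simps)
qed

text \<open>\<open>2 tree_gf - 1\<close>, the generating function of the pairs with overlap 0.\<close>
definition zero_overlap_gf :: "real fps" where
  "zero_overlap_gf = 1 + fps_const 2 * (fps_X * tree_gf ^ 2)"

definition overlap_gf :: "nat \<Rightarrow> real fps" where
  "overlap_gf k = Abs_fps (\<lambda>n. real (card (overlap_pairs n k)))"

lemma overlap_gf_0: "overlap_gf 0 = zero_overlap_gf"
proof (rule fps_ext)
  fix n show "fps_nth (overlap_gf 0) n = fps_nth zero_overlap_gf n"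
    by (cases n) (simp_all add: overlap_gf_def zero_overlap_gf_def card_overlap_pairs_0
        fps_nth_tree_gf_square)
qed

lemma overlap_gf_Suc:
  "overlap_gf (Suc k) = fps_X ^ 2 * (\<Sum>j\<le>k. overlap_gf j * overlap_gf (k - j))"
proof (rule fps_ext)
  fix n
  show "fps_nth (overlap_gf (Suc k)) n =
      fps_nth (fps_X ^ 2 * (\<Sum>j\<le>k. overlap_gf j * overlap_gf (k - j))) n"
  proof (cases "n < 2")
    case True
    then show ?thesis
      by (simp add: overlap_gf_def overlap_pairs_Suc_eq_empty fps_X_power_mult_nth)
  next
    case False
    then obtain m where m: "n = Suc (Suc m)"
      by (metis add_2_eq_Suc le_add_diff_inverse not_less)
    have "fps_nth (fps_X ^ 2 * (\<Sum>j\<le>k. overlap_gf j * overlap_gf (k - j))) n =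
        fps_nth (\<Sum>j\<le>k. overlap_gf j * overlap_gf (k - j)) m"
      using m by (simp add: fps_X_power_mult_nth)
    also have "\<dots> = (\<Sum>j\<le>k. \<Sum>i\<le>m.
        real (card (overlap_pairs i j)) * real (card (overlap_pairs (m - i) (k - j))))"
      by (simp add: fps_sum_nth fps_mult_nth atLeast0AtMost overlap_gf_def)
    also have "\<dots> = real (card (overlap_pairs n (Suc k)))"
      unfolding m card_overlap_pairs_Suc_Suc by simp
    finally show ?thesis
      by (simp add: overlap_gf_def)
  qed
qed

text \<open>A pair with overlap \<open>k\<close> is its common part, a tree with \<open>k\<close> nodes each counted in
  both members, with a pair of overlap 0 at each of its \<open>k + 1\<close> external positions.\<close>
lemma overlap_gf_eq:
  "overlap_gf k = of_nat (num_trees k) * (fps_X ^ (2 * k) * zero_overlap_gf ^ Suc k)"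
proof (induction k rule: less_induct)
  case (less k)
  show ?case
  proof (cases k)
    case 0
    then show ?thesis
      by (simp add: overlap_gf_0)
  next
    case (Suc k')
    have "overlap_gf j * overlap_gf (k' - j) =
        of_nat (num_trees j * num_trees (k' - j)) *
        (fps_X ^ (2 * k') * zero_overlap_gf ^ Suc (Suc k'))"
      if "j \<le> k'" for j
    proof -
      have "j < k" "k' - j < k"
        using that Suc by auto
      then have prod: "overlap_gf j * overlap_gf (k' - j) =
          of_nat (num_trees j) * of_nat (num_trees (k' - j)) *
          ((fps_X ^ (2 * j) * fps_X ^ (2 * (k' - j))) *
           (zero_overlap_gf ^ Suc j * zero_overlap_gf ^ Suc (k' - j)))"
        by (simp only: less.IH ac_simps)
      have "(fps_X :: real fps) ^ (2 * j) * fps_X ^ (2 * (k' - j)) = fps_X ^ (2 * k')"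
        "zero_overlap_gf ^ Suc j * zero_overlap_gf ^ Suc (k' - j) = zero_overlap_gf ^ Suc (Suc k')"
        using that by (simp_all flip: power_add)
      with prod show ?thesis
        by simp
    qed
    then have "overlap_gf k = fps_X ^ 2 * (of_nat (\<Sum>j\<le>k'. num_trees j * num_trees (k' - j)) *
        (fps_X ^ (2 * k') * zero_overlap_gf ^ Suc (Suc k')))"
      by (simp add: Suc overlap_gf_Suc sum_distrib_right)
    also have "\<dots> = of_nat (num_trees k) * ((fps_X ^ 2 * fps_X ^ (2 * k')) * zero_overlap_gf ^ Suc k)"
      by (simp only: Suc num_trees_Suc mult_ac)
    also have "fps_X ^ 2 * fps_X ^ (2 * k') = (fps_X ^ (2 * k) :: real fps)"
      by (simp add: Suc flip: power_add)
    finally show ?thesis .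
  qed
qed

lemma card_overlap_pairs_eq:
  "real (card (overlap_pairs n k)) =
     real (num_trees k) * (if 2 * k \<le> n then fps_nth (zero_overlap_gf ^ Suc k) (n - 2 * k) else 0)"
proof -
  have "real (card (overlap_pairs n k)) = fps_nth (overlap_gf k) n"
    by (simp add: overlap_gf_def)
  then show ?thesis
    unfolding overlap_gf_eq by (simp add: fps_X_power_mult_nth flip: fps_of_nat del: power_Suc)
qed

lemma fps_nth_zero_overlap_gf_power:
  "fps_nth (zero_overlap_gf ^ s) p =
     (\<Sum>i\<le>s. real (s choose i) * 2 ^ i * (if i \<le> p then forest_count (2 * i) (p - i) else 0))"
proof -
  have "zero_overlap_gf ^ s =
      (\<Sum>i\<le>s. of_nat (s choose i) * (fps_const 2 * (fps_X * tree_gf ^ 2)) ^ i * 1 ^ (s - i))"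
    unfolding zero_overlap_gf_def by (subst add.commute) (rule binomial_ring)
  also have "\<dots> = (\<Sum>i\<le>s. fps_const (real (s choose i) * 2 ^ i) * (fps_X ^ i * tree_gf ^ (2 * i)))"
    by (intro sum.cong refl)
      (simp add: power_mult_distrib fps_of_nat[symmetric] mult_ac flip: power_mult)
  finally show ?thesis
    by (simp add: fps_sum_nth fps_X_power_mult_nth)
      (intro sum.cong refl, simp add: forest_count_def not_less)
qed

section \<open>Asymptotics of the coefficients\<close>

lemma num_trees_ratio:
  "real (num_trees m) / real (num_trees (Suc m)) = (real m + 2) / (4 * real m + 2)"
  using num_trees_Suc_ratio[of m]
  by (simp add: field_simps; simp add: algebra_simps)

lemma tendsto_num_trees_ratio:
  "(\<lambda>q. real (num_trees q) / real (num_trees (q + d))) \<longlonglongrightarrow> (1 / 4) ^ d"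
proof (induction d)
  case (Suc d)
  have "(\<lambda>m. real (num_trees m) / real (num_trees (Suc m))) \<longlonglongrightarrow> 1 / 4"
    unfolding num_trees_ratio by real_asymp
  from LIMSEQ_ignore_initial_segment[OF this, of d]
  have "(\<lambda>q. real (num_trees q) / real (num_trees (q + d)) *
      (real (num_trees (q + d)) / real (num_trees (q + Suc d))))
      \<longlonglongrightarrow> (1 / 4) ^ d * (1 / 4)"
    by (intro tendsto_mult Suc.IH) simp
  then show ?case
    by (simp add: mult.commute)
qed simp

lemma forest_count_Suc_Suc_div:
  "forest_count (Suc (Suc s)) q / real (num_trees q) =
     (real (s + 2) * real (2 * q + s + 1)) / (real (s + 1) * real (q + s + 2)) *
     (forest_count (Suc s) q / real (num_trees q))"
proof -
  have "forest_count (Suc (Suc s)) q =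
      real (s + 2) * real (2 * q + s + 1) * forest_count (Suc s) q /
      (real (s + 1) * real (q + s + 2))"
    using forest_count_Suc_Suc_ratio[of s q] by (simp add: eq_divide_eq)
  then show ?thesis
    by simp
qed

lemma tendsto_forest_count_Suc:
  "(\<lambda>q. forest_count (Suc s) q / real (num_trees q)) \<longlonglongrightarrow> real (Suc s) * 2 ^ s"
proof (induction s)
  case 0
  then show ?case
    by (simp add: forest_count_def)
next
  case (Suc s)
  have ratio: "(\<lambda>q. (real (s + 2) * real (2 * q + s + 1)) / (real (s + 1) * real (q + s + 2)))
      \<longlonglongrightarrow> (real s * 2 + 4) * inverse (real s + 1)"
    by real_asymp
  have limit_eq: "(real s * 2 + 4) * inverse (real s + 1) * (real (Suc s) * 2 ^ s) =
      real (Suc (Suc s)) * 2 ^ Suc s"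
    by (simp add: field_simps)
  show ?case
    using tendsto_mult[OF ratio Suc.IH] unfolding forest_count_Suc_Suc_div limit_eq .
qed

lemma tendsto_forest_count:
  "(\<lambda>q. forest_count r q / real (num_trees q)) \<longlonglongrightarrow> real r * 2 ^ r / 2"
proof (cases r)
  case 0
  have "(\<lambda>q. forest_count 0 (Suc q) / real (num_trees (Suc q))) \<longlonglongrightarrow> 0"
    by simp
  then have "(\<lambda>q. forest_count 0 q / real (num_trees q)) \<longlonglongrightarrow> 0"
    by (rule LIMSEQ_imp_Suc)
  with 0 show ?thesis
    by simp
next
  case (Suc s)
  then show ?thesis
    using tendsto_forest_count_Suc[of s] by simp
qed

lemma num_trees_le_four_power: "real (num_trees k) \<le> 4 ^ k"
proof (induction k)
  case (Suc k)
  have "real (num_trees (Suc k)) * (real k + 2) \<le> 4 * real (num_trees k) * (real k + 2)"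
    unfolding num_trees_Suc_ratio by (simp add: algebra_simps)
  then have "real (num_trees (Suc k)) \<le> 4 * real (num_trees k)"
    by (simp add: mult_le_cancel_right)
  also have "\<dots> \<le> 4 * 4 ^ k"
    using Suc.IH by linarith
  finally show ?case
    by simp
qed simp

lemma four_power_le_num_trees: "4 ^ d \<le> real (num_trees d) * (real d + 1) ^ 2"
proof (induction d)
  case (Suc d)
  have "4 * (real d + 1) ^ 2 \<le> 2 * (2 * real d + 1) * (real d + 2)"
    by (simp add: power2_eq_square algebra_simps)
  have "4 ^ Suc d \<le> 4 * (real (num_trees d) * (real d + 1) ^ 2)"
    using Suc by simp
  also have "\<dots> \<le> 2 * (2 * real d + 1) * real (num_trees d) * (real d + 2)"
    using \<open>4 * (real d + 1) ^ 2 \<le> _\<close> by (simp add: mult_left_mono mult.left_commute mult.assoc)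
  also have "\<dots> = real (num_trees (Suc d)) * (real d + 2) * (real d + 2)"
    unfolding num_trees_Suc_ratio by simp
  also have "\<dots> = real (num_trees (Suc d)) * (real (Suc d) + 1) ^ 2"
    by (simp add: power2_eq_square algebra_simps)
  finally show ?case .
qed simp

lemma num_trees_mult_le: "num_trees q * num_trees d \<le> num_trees (q + Suc d)"
proof -
  have "num_trees q * num_trees (q + d - q) \<le> (\<Sum>j\<le>q + d. num_trees j * num_trees (q + d - j))"
    by (rule member_le_sum) auto
  then show ?thesis
    by (simp add: num_trees_Suc)
qed

lemma forest_count_Suc_le:
  "forest_count (Suc s) q \<le> real (Suc s) * 2 ^ s * real (num_trees q)"
proof (induction s)
  case 0
  then show ?case
    by (simp add: forest_count_def)
next
  case (Suc s)
  have "real (s + 2) * real (2 * q + s + 1) * forest_count (Suc s) q \<le>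
      real (s + 2) * (2 * real (q + s + 2)) * (real (Suc s) * 2 ^ s * real (num_trees q))"
    using Suc forest_count_nonneg[of "Suc s" q] by (intro mult_mono) auto
  then have "forest_count (Suc (Suc s)) q * (real (s + 1) * real (q + s + 2)) \<le>
      real (Suc (Suc s)) * 2 ^ Suc s * real (num_trees q) * (real (s + 1) * real (q + s + 2))"
    unfolding forest_count_Suc_Suc_ratio by (simp add: algebra_simps)
  then show ?case
    by (rule mult_right_le_imp_le) simp
qed

lemma forest_count_le: "forest_count r q \<le> real (Suc r) * 2 ^ r * real (num_trees q)"
proof (cases r)
  case 0
  then show ?thesis
    by (cases q) auto
next
  case (Suc s)
  then have "forest_count r q \<le> real (Suc s) * 2 ^ s * real (num_trees q)"
    by (simp only: forest_count_Suc_le)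
  also have "\<dots> \<le> real (Suc r) * 2 ^ r * real (num_trees q)"
    using Suc by (intro mult_right_mono mult_mono) auto
  finally show ?thesis .
qed

lemma forest_count_div_num_trees_le:
  "forest_count r q / real (num_trees (q + Suc d)) \<le>
     real (Suc r) * 2 ^ r * (real d + 1) ^ 2 / 4 ^ d"
proof -
  have "forest_count r q / real (num_trees (q + Suc d)) \<le>
      real (Suc r) * 2 ^ r * (real (num_trees q) / real (num_trees (q + Suc d)))"
    using forest_count_le[of r q] by (simp add: divide_right_mono)
  also have "real (num_trees q) / real (num_trees (q + Suc d)) \<le> 1 / real (num_trees d)"
  proof -
    have "real (num_trees q) * real (num_trees d) \<le> real (num_trees (q + Suc d))"
      by (simp only: of_nat_mult[symmetric] of_nat_le_iff num_trees_mult_le)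
    then show ?thesis
      by (simp add: divide_simps mult.commute)
  qed
  also have "1 / real (num_trees d) \<le> (real d + 1) ^ 2 / 4 ^ d"
    using four_power_le_num_trees[of d] by (simp add: divide_simps mult.commute)
  finally show ?thesis
    by (simp add: mult_left_mono)
qed

section \<open>The limit law\<close>

definition ds_limit_law :: "nat \<Rightarrow> real" where
  "ds_limit_law k = 1 / 2 * real ((2 * k) choose k) * (3 / 16) ^ k"

lemma ds_limit_law_Suc:
  "8 * (real k + 1) * ds_limit_law (Suc k) = 3 * (2 * real k + 1) * ds_limit_law k"
proof -
  have "real (num_trees (Suc k)) * (real k + 2) = 2 * (2 * real k + 1) * real (num_trees k)"
    by (rule num_trees_Suc_ratio)
  then show ?thesis
    unfolding ds_limit_law_def num_trees_central_binomial[symmetric] by (simp add: field_simps)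
qed

lemma prob_ds_Suc:
  "prob_ds (Suc n) k = real (num_trees k) *
     (if 2 * k \<le> n then \<Sum>i\<le>Suc k. real (Suc k choose i) * 2 ^ i *
        (if i \<le> n - 2 * k then forest_count (2 * i) (n - 2 * k - i) else 0) else 0) /
     real (num_trees (Suc n))"
proof -
  have "prob_ds (Suc n) k = real (card (overlap_pairs n k)) / real (num_trees (Suc n))"
    by (simp add: prob_ds_def card_ds_eq_card_overlap_pairs num_trees_def)
  then show ?thesis
    unfolding card_overlap_pairs_eq fps_nth_zero_overlap_gf_power .
qed

text \<open>From \<open>n = q + 3k + 2\<close> on, all truncated subtractions in \<open>prob_ds_Suc\<close> are exact.\<close>
lemma prob_ds_eq_ratios:
  fixes q k :: nat
  defines "m i \<equiv> q + (Suc k - i)"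
  shows "prob_ds (q + (3 * k + 2)) k = real (num_trees k) *
     (\<Sum>i\<le>Suc k. real (Suc k choose i) * 2 ^ i *
        (forest_count (2 * i) (m i) / real (num_trees (m i)) *
         (real (num_trees (m i)) / real (num_trees (m i + (2 * k + 1 + i))))))"
proof -
  let ?n = "q + 3 * k + 1"
  have "q + (3 * k + 2) = Suc ?n" "2 * k \<le> ?n"
    by simp_all
  then have "prob_ds (q + (3 * k + 2)) k = real (num_trees k) *
      (\<Sum>i\<le>Suc k. real (Suc k choose i) * 2 ^ i *
        (if i \<le> ?n - 2 * k then forest_count (2 * i) (?n - 2 * k - i) else 0)) /
      real (num_trees (Suc ?n))"
    by (simp only: prob_ds_Suc if_True)
  also have "\<dots> = real (num_trees k) *
      (\<Sum>i\<le>Suc k. real (Suc k choose i) * 2 ^ i *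
        ((if i \<le> ?n - 2 * k then forest_count (2 * i) (?n - 2 * k - i) else 0) /
         real (num_trees (Suc ?n))))"
    by (simp only: times_divide_eq_right[symmetric] sum_divide_distrib)
  also have "\<dots> = real (num_trees k) *
      (\<Sum>i\<le>Suc k. real (Suc k choose i) * 2 ^ i *
        (forest_count (2 * i) (m i) / real (num_trees (m i + (2 * k + 1 + i)))))"
  proof (intro arg_cong[where f = "\<lambda>x. real (num_trees k) * x"] sum.cong refl)
    fix i assume "i \<in> {..Suc k}"
    then have "i \<le> ?n - 2 * k" "?n - 2 * k - i = m i" "Suc ?n = m i + (2 * k + 1 + i)"
      by (auto simp: m_def)
    then show "real (Suc k choose i) * 2 ^ i *
        ((if i \<le> ?n - 2 * k then forest_count (2 * i) (?n - 2 * k - i) else 0) /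
         real (num_trees (Suc ?n))) =
      real (Suc k choose i) * 2 ^ i *
        (forest_count (2 * i) (m i) / real (num_trees (m i + (2 * k + 1 + i))))"
      by (simp only: if_True)
  qed
  finally show ?thesis
    by simp
qed

lemma sum_index_binomial_power:
  fixes x :: real
  shows "(\<Sum>i\<le>Suc n. real i * real (Suc n choose i) * x ^ i) =
    real (Suc n) * x * (x + 1) ^ n"
proof -
  have binom: "real (Suc i) * real (Suc n choose Suc i) = real (Suc n) * real (n choose i)" for i
    by (metis Suc_times_binomial of_nat_mult)
  have "(\<Sum>i\<le>Suc n. real i * real (Suc n choose i) * x ^ i) =
      (\<Sum>i\<le>n. real (Suc i) * real (Suc n choose Suc i) * x ^ Suc i)"
    by (subst sum.atMost_Suc_shift) simp
  also have "\<dots> = (\<Sum>i\<le>n. real (Suc n) * x * (real (n choose i) * x ^ i * 1 ^ (n - i)))"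
    unfolding binom by (simp add: mult_ac)
  also have "\<dots> = real (Suc n) * x * (x + 1) ^ n"
    by (simp add: binomial_ring[of x 1 n] sum_distrib_left)
  finally show ?thesis .
qed

lemma ds_limit_law_eq_sum:
  "ds_limit_law k = real (num_trees k) *
     (\<Sum>i\<le>Suc k. real (Suc k choose i) * 2 ^ i *
        (real (2 * i) * 2 ^ (2 * i) / 2 * (1 / 4) ^ (2 * k + 1 + i)))"
proof -
  have summand:
    "real (2 * i) * 2 ^ (2 * i) / 2 * (1 / 4) ^ (2 * k + 1 + i) = real i * (1 / 4) ^ (2 * k + 1)"
    for i :: nat
  proof -
    have "(2 :: real) ^ (2 * i) = 4 ^ i"
      by (simp add: power_mult)
    then show ?thesis
      by (simp add: power_add power_one_over field_simps)
  qed
  have "(\<Sum>i\<le>Suc k. real (Suc k choose i) * 2 ^ i *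
        (real (2 * i) * 2 ^ (2 * i) / 2 * (1 / 4) ^ (2 * k + 1 + i))) =
      (\<Sum>i\<le>Suc k. real (Suc k choose i) * 2 ^ i * (real i * (1 / 4) ^ (2 * k + 1)))"
    by (simp only: summand)
  also have "\<dots> = (1 / 4) ^ (2 * k + 1) * (\<Sum>i\<le>Suc k. real i * real (Suc k choose i) * 2 ^ i)"
    unfolding sum_distrib_left by (intro sum.cong refl) (simp add: mult_ac)
  also have "\<dots> = (1 / 4) ^ (2 * k + 1) * (real (Suc k) * 2 * 3 ^ k)"
    using sum_index_binomial_power[of k 2] by simp
  finally have sum_eq: "(\<Sum>i\<le>Suc k. real (Suc k choose i) * 2 ^ i *
        (real (2 * i) * 2 ^ (2 * i) / 2 * (1 / 4) ^ (2 * k + 1 + i))) =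
      (1 / 4) ^ (2 * k + 1) * (real (Suc k) * 2 * 3 ^ k)" .
  have powers: "(1 / 4 :: real) ^ (2 * k + 1) = 1 / 4 * (1 / 16) ^ k"
    "(3 / 16 :: real) ^ k = 3 ^ k * (1 / 16) ^ k"
    by (simp_all add: power_add power_mult power_divide)
  have "ds_limit_law k = 1 / 2 * (real (num_trees k) * (real k + 1)) * (3 / 16) ^ k"
    by (simp add: ds_limit_law_def num_trees_central_binomial)
  then show ?thesis
    unfolding sum_eq powers by (simp add: algebra_simps)
qed

lemma tendsto_prob_ds: "(\<lambda>n. prob_ds n k) \<longlonglongrightarrow> ds_limit_law k"
proof (rule LIMSEQ_offset[where k = "3 * k + 2"])
  have "(\<lambda>q. real (num_trees k) *
     (\<Sum>i\<le>Suc k. real (Suc k choose i) * 2 ^ i *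
        (forest_count (2 * i) (q + (Suc k - i)) / real (num_trees (q + (Suc k - i))) *
         (real (num_trees (q + (Suc k - i))) /
          real (num_trees (q + (Suc k - i) + (2 * k + 1 + i)))))))
    \<longlonglongrightarrow> real (num_trees k) *
     (\<Sum>i\<le>Suc k. real (Suc k choose i) * 2 ^ i *
        (real (2 * i) * 2 ^ (2 * i) / 2 * (1 / 4) ^ (2 * k + 1 + i)))"
  proof (intro tendsto_mult_left tendsto_sum tendsto_mult)
    fix i
    show "(\<lambda>q. forest_count (2 * i) (q + (Suc k - i)) / real (num_trees (q + (Suc k - i))))
        \<longlonglongrightarrow> real (2 * i) * 2 ^ (2 * i) / 2"
      by (rule LIMSEQ_ignore_initial_segment[OF tendsto_forest_count])
    show "(\<lambda>q. real (num_trees (q + (Suc k - i))) /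
        real (num_trees (q + (Suc k - i) + (2 * k + 1 + i)))) \<longlonglongrightarrow> (1 / 4) ^ (2 * k + 1 + i)"
      by (rule LIMSEQ_ignore_initial_segment[OF tendsto_num_trees_ratio])
  qed
  then show "(\<lambda>q. prob_ds (q + (3 * k + 2)) k) \<longlonglongrightarrow> ds_limit_law k"
    unfolding prob_ds_eq_ratios ds_limit_law_eq_sum[symmetric] .
qed

section \<open>Moments\<close>

lemma forest_count_term_le:
  assumes "i \<le> Suc k" "2 * k + i \<le> n"
  shows "forest_count (2 * i) (n - 2 * k - i) / real (num_trees (Suc n)) \<le>
    (2 * real k + 3) * (3 * real k + 2) ^ 2 / 16 ^ k"
proof -
  have "Suc n = (n - 2 * k - i) + Suc (2 * k + i)"
    using assms by simp
  then have "forest_count (2 * i) (n - 2 * k - i) / real (num_trees (Suc n)) \<le>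
      real (Suc (2 * i)) * 2 ^ (2 * i) * (real (2 * k + i) + 1) ^ 2 / 4 ^ (2 * k + i)"
    by (simp only: forest_count_div_num_trees_le)
  also have "\<dots> = real (Suc (2 * i)) * (real (2 * k + i) + 1) ^ 2 / 16 ^ k"
    by (simp add: power_add power_mult)
  also have "\<dots> \<le> (2 * real k + 3) * (3 * real k + 2) ^ 2 / 16 ^ k"
    using assms by (intro divide_right_mono mult_mono power_mono) auto
  finally show ?thesis .
qed

definition prob_ds_bound :: "nat \<Rightarrow> real" where
  "prob_ds_bound k = 3 * (2 * real k + 3) * (3 * real k + 2) ^ 2 * (3 / 4) ^ k"

lemma prob_ds_Suc_le: "prob_ds (Suc n) k \<le> prob_ds_bound k"
proof (cases "2 * k \<le> n")
  case False
  then show ?thesis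
    by (simp add: prob_ds_Suc prob_ds_bound_def)
next
  case True
  have sum_binomial_two_power: "(\<Sum>i\<le>Suc k. real (Suc k choose i) * 2 ^ i) = 3 ^ Suc k"
    using binomial_ring[of "2 :: real" 1 "Suc k"] by simp
  define B where "B = (2 * real k + 3) * (3 * real k + 2) ^ 2 / 16 ^ k"
  have "prob_ds (Suc n) k = real (num_trees k) *
      (\<Sum>i\<le>Suc k. real (Suc k choose i) * 2 ^ i *
        ((if i \<le> n - 2 * k then forest_count (2 * i) (n - 2 * k - i) else 0) /
         real (num_trees (Suc n))))"
    using True
    by (simp only: prob_ds_Suc if_True times_divide_eq_right[symmetric] sum_divide_distrib)
  also have "\<dots> \<le> real (num_trees k) * (\<Sum>i\<le>Suc k. real (Suc k choose i) * 2 ^ i * B)"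
    using True forest_count_term_le[of _ k n]
    by (intro mult_left_mono sum_mono) (auto simp: B_def)
  also have "\<dots> = real (num_trees k) * 3 ^ Suc k * B"
    unfolding sum_distrib_right[symmetric] sum_binomial_two_power by (simp only: mult.assoc)
  also have "\<dots> \<le> 4 ^ k * 3 ^ Suc k * B"
    by (intro mult_right_mono num_trees_le_four_power) (auto simp: B_def)
  also have "\<dots> = prob_ds_bound k"
  proof -
    have "(16 :: real) ^ k = 4 ^ k * 4 ^ k" "(3 / 4 :: real) ^ k = 3 ^ k / 4 ^ k"
      by (simp_all add: power_divide flip: power_mult_distrib)
    then show ?thesis
      by (simp add: B_def prob_ds_bound_def divide_simps)
  qed
  finally show ?thesis .
qed

lemma prob_ds_nonneg: "prob_ds n k \<ge> 0"
  by (simp add: prob_ds_def)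

lemma prob_ds_bound_nonneg: "prob_ds_bound k \<ge> 0"
  by (simp add: prob_ds_bound_def)

lemma le_power2_add_one: "(x :: real) \<le> x ^ 2 + 1"
proof -
  have "0 \<le> x ^ 2 + 1 - 2 * x"
    using zero_le_power2[of "x - 1"] by (simp add: power2_diff)
  moreover have "0 \<le> x ^ 2"
    by simp
  ultimately show ?thesis
    by linarith
qed

lemma summable_prob_ds_bound: "summable (\<lambda>k. (real k ^ 2 + 1) * prob_ds_bound k)"
proof (rule summable_comparison_test_ev)
  have "(\<lambda>k. (real k ^ 2 + 1) * prob_ds_bound k / (7 / 8) ^ k) \<longlonglongrightarrow> 0"
    unfolding prob_ds_bound_def by real_asymp
  then have "eventually (\<lambda>k. (real k ^ 2 + 1) * prob_ds_bound k / (7 / 8) ^ k < 1) sequentially"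
    by (rule order_tendstoD) simp
  then show "eventually (\<lambda>k. norm ((real k ^ 2 + 1) * prob_ds_bound k) \<le> (7 / 8) ^ k) sequentially"
    by eventually_elim (simp add: prob_ds_bound_def divide_less_eq)
qed (simp add: summable_geometric)

lemma prob_ds_eq_0:
  assumes "n < k"
  shows "prob_ds n k = 0"
proof -
  have "ds t \<noteq> k" if "t \<in> trees n" for t
    using that assms ds_le_nodes[of t] by (simp add: trees_def)
  then have "{t \<in> trees n. ds t = k} = {}"
    by blast
  then show ?thesis
    by (simp add: prob_ds_def)
qed

lemma suminf_mult_prob_ds:
  fixes g :: "nat \<Rightarrow> real"
  shows "(\<Sum>k. g k * prob_ds n k) = (\<Sum>t\<in>trees n. g (ds t)) / real (card (trees n))"
proof -
  have "(\<Sum>k. g k * prob_ds n k) = (\<Sum>k\<le>n. g k * prob_ds n k)"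
    by (rule suminf_finite) (auto simp: prob_ds_eq_0)
  also have "\<dots> = (\<Sum>k\<le>n. \<Sum>t\<in>{t \<in> trees n. ds t = k}. g (ds t)) / real (card (trees n))"
    by (simp add: prob_ds_def sum_divide_distrib mult.commute)
  also have "(\<Sum>k\<le>n. \<Sum>t\<in>{t \<in> trees n. ds t = k}. g (ds t)) = (\<Sum>t\<in>trees n. g (ds t))"
    using ds_le_nodes by (intro sum.group finite_trees finite_atMost) (auto simp: trees_def)
  finally show ?thesis .
qed

lemma norm_mult_prob_ds_le:
  fixes g :: "nat \<Rightarrow> real"
  assumes "0 \<le> g k" and "g k \<le> real k ^ 2 + 1" and "n \<ge> 1"
  shows "norm (g k * prob_ds n k) \<le> (real k ^ 2 + 1) * prob_ds_bound k"
proof -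
  from \<open>n \<ge> 1\<close> obtain n' where n': "n = Suc n'"
    by (cases n) auto
  have "norm (g k * prob_ds n k) = g k * prob_ds n k"
    using assms prob_ds_nonneg by simp
  also have "\<dots> \<le> g k * prob_ds_bound k"
    unfolding n' by (rule mult_left_mono[OF prob_ds_Suc_le assms(1)])
  also have "\<dots> \<le> (real k ^ 2 + 1) * prob_ds_bound k"
    by (rule mult_right_mono[OF assms(2) prob_ds_bound_nonneg])
  finally show ?thesis .
qed

lemma tendsto_moment_prob_ds:
  fixes g :: "nat \<Rightarrow> real"
  assumes nonneg: "\<And>k. 0 \<le> g k" and le: "\<And>k. g k \<le> real k ^ 2 + 1"
  shows "(\<lambda>n. \<Sum>k. g k * prob_ds n k) \<longlonglongrightarrow> (\<Sum>k. g k * ds_limit_law k)"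
    and "summable (\<lambda>k. g k * ds_limit_law k)"
proof -
  have "\<forall>k n. n \<ge> 1 \<longrightarrow> norm (g k * prob_ds n k) \<le> (real k ^ 2 + 1) * prob_ds_bound k"
    using norm_mult_prob_ds_le[of g] nonneg le by blast
  then have ev: "eventually
      (\<lambda>(k, n). norm (g k * prob_ds n k) \<le> (real k ^ 2 + 1) * prob_ds_bound k)
      (at_top \<times>\<^sub>F sequentially)"
    unfolding eventually_prod_filter
    by (intro exI[of _ "\<lambda>k. True"] exI[of _ "\<lambda>n. n \<ge> 1"] conjI)
      (simp_all only: eventually_True eventually_ge_at_top case_prod_conv simp_thms)
  have lim: "(\<lambda>n. g k * prob_ds n k) \<longlonglongrightarrow> g k * ds_limit_law k" for k
    by (intro tendsto_mult_left tendsto_prob_ds)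
  have "eventually (\<lambda>n. summable (\<lambda>k. norm (g k * prob_ds n k))) sequentially \<and>
      summable (\<lambda>k. norm (g k * ds_limit_law k)) \<and>
      (\<lambda>n. \<Sum>k. g k * prob_ds n k) \<longlonglongrightarrow> (\<Sum>k. g k * ds_limit_law k)"
    by (rule tannerys_theorem[OF lim ev summable_prob_ds_bound]) simp
  then show "(\<lambda>n. \<Sum>k. g k * prob_ds n k) \<longlonglongrightarrow> (\<Sum>k. g k * ds_limit_law k)"
    and "summable (\<lambda>k. g k * ds_limit_law k)"
    by (auto intro: summable_norm_cancel)
qed

lemma sums_ds_limit_law: "ds_limit_law sums 1"
proof -
  have "(\<Sum>k. 1 * prob_ds n k) = 1" for n
    using suminf_mult_prob_ds[of "\<lambda>_. 1" n] num_trees_neq_0[of n]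
    by (simp add: num_trees_def)
  with tendsto_moment_prob_ds(1)[of "\<lambda>_. 1"] have "(\<lambda>n. 1) \<longlonglongrightarrow> (\<Sum>k. ds_limit_law k)"
    by simp
  then have "(\<Sum>k. ds_limit_law k) = 1"
    by (simp add: LIMSEQ_const_iff)
  with tendsto_moment_prob_ds(2)[of "\<lambda>_. 1"] show ?thesis
    by (simp add: sums_iff)
qed

text \<open>Summing the recurrence \<open>ds_limit_law_Suc\<close> over all \<open>k\<close>, weighted by \<open>1\<close> and by
  \<open>k + 1\<close>, gives linear equations for the first two moments.\<close>
lemma sums_index_ds_limit_law: "(\<lambda>k. real k * ds_limit_law k) sums (3 / 2)"
proof -
  obtain M where M: "(\<lambda>k. real k * ds_limit_law k) sums M"
    using tendsto_moment_prob_ds(2)[of real] le_power2_add_one by (auto simp: sums_iff)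
  have "(\<lambda>k. real (Suc k) * ds_limit_law (Suc k)) sums M"
    using M sums_Suc_iff[of "\<lambda>k. real k * ds_limit_law k" M] by simp
  from sums_mult[OF this, of 8]
  have "(\<lambda>k. 8 * (real (Suc k) * ds_limit_law (Suc k))) sums (8 * M)" .
  moreover have "(\<lambda>k. 8 * (real (Suc k) * ds_limit_law (Suc k))) =
      (\<lambda>k. 6 * (real k * ds_limit_law k) + 3 * ds_limit_law k)"
    using ds_limit_law_Suc by (simp add: fun_eq_iff algebra_simps)
  moreover have "(\<lambda>k. 6 * (real k * ds_limit_law k) + 3 * ds_limit_law k) sums (6 * M + 3 * 1)"
    by (intro sums_add sums_mult M sums_ds_limit_law)
  ultimately have "8 * M = 6 * M + 3"
    using sums_unique2 by fastforce
  then have "M = 3 / 2"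
    by linarith
  with M show ?thesis
    by simp
qed

lemma sums_index_square_ds_limit_law: "(\<lambda>k. real k ^ 2 * ds_limit_law k) sums (33 / 4)"
proof -
  obtain Q where Q: "(\<lambda>k. real k ^ 2 * ds_limit_law k) sums Q"
    using tendsto_moment_prob_ds(2)[of "\<lambda>k. real k ^ 2"] by (auto simp: sums_iff)
  have "(\<lambda>k. real (Suc k) ^ 2 * ds_limit_law (Suc k)) sums Q"
    using Q sums_Suc_iff[of "\<lambda>k. real k ^ 2 * ds_limit_law k" Q] by simp
  from sums_mult[OF this, of 8]
  have "(\<lambda>k. 8 * (real (Suc k) ^ 2 * ds_limit_law (Suc k))) sums (8 * Q)" .
  moreover have "8 * (real (Suc k) ^ 2 * ds_limit_law (Suc k)) =
      6 * (real k ^ 2 * ds_limit_law k) + 9 * (real k * ds_limit_law k) + 3 * ds_limit_law k" for k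
  proof -
    have "8 * (real (Suc k) ^ 2 * ds_limit_law (Suc k)) =
        (real k + 1) * (8 * (real k + 1) * ds_limit_law (Suc k))"
      by (simp add: power2_eq_square algebra_simps)
    then show ?thesis
      by (simp only: ds_limit_law_Suc) (simp add: power2_eq_square algebra_simps)
  qed
  moreover have "(\<lambda>k. 6 * (real k ^ 2 * ds_limit_law k) + 9 * (real k * ds_limit_law k) +
      3 * ds_limit_law k) sums (6 * Q + 9 * (3 / 2) + 3 * 1)"
    by (intro sums_add sums_mult Q sums_index_ds_limit_law sums_ds_limit_law)
  ultimately have "8 * Q = 6 * Q + 9 * (3 / 2) + 3"
    using sums_unique2 by fastforce
  then have "Q = 33 / 4"
    by linarith
  with Q show ?thesis
    by simp
qed

lemma average_square_deviation:
  fixes f :: "'a \<Rightarrow> real"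
  assumes "finite S" and "S \<noteq> {}"
  defines "\<mu> \<equiv> (\<Sum>t\<in>S. f t) / real (card S)"
  shows "(\<Sum>t\<in>S. (f t - \<mu>) ^ 2) / real (card S) =
    (\<Sum>t\<in>S. f t ^ 2) / real (card S) - \<mu> ^ 2"
proof -
  have N: "real (card S) > 0"
    using assms by (simp add: card_gt_0_iff)
  have "(\<Sum>t\<in>S. (f t - \<mu>) ^ 2) =
      (\<Sum>t\<in>S. f t ^ 2) - 2 * \<mu> * (\<Sum>t\<in>S. f t) + real (card S) * \<mu> ^ 2"
    by (simp add: power2_diff sum.distrib sum_subtractf flip: sum_distrib_left sum_distrib_right)
  also have "\<dots> = (\<Sum>t\<in>S. f t ^ 2) - real (card S) * \<mu> ^ 2"
    using N by (simp add: \<mu>_def power2_eq_square field_simps)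
  finally show ?thesis
    using N by (simp add: field_simps)
qed

lemma exp_ds_eq_suminf: "exp_ds n = (\<Sum>k. real k * prob_ds n k)"
  by (simp add: exp_ds_def suminf_mult_prob_ds)

lemma var_ds_eq_suminf: "var_ds n = (\<Sum>k. real k ^ 2 * prob_ds n k) - exp_ds n ^ 2"
proof -
  have "trees n \<noteq> {}"
    using num_trees_neq_0[of n] by (auto simp: num_trees_def)
  then show ?thesis
    unfolding var_ds_def suminf_mult_prob_ds exp_ds_def
    by (subst average_square_deviation) simp_all
qed

theorem corollary4p2:
  shows "(\<forall>k::nat. (\<lambda>n. prob_ds n k) \<longlonglongrightarrow> 1/2 * real ((2*k) choose k) * (3/16)^k)
     \<and> exp_ds \<longlonglongrightarrow> 3/2
     \<and> var_ds \<longlonglongrightarrow> 6"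
proof (intro conjI allI)
  show "(\<lambda>n. prob_ds n k) \<longlonglongrightarrow> 1/2 * real ((2*k) choose k) * (3/16)^k" for k
    using tendsto_prob_ds unfolding ds_limit_law_def .
  have mean: "(\<lambda>n. \<Sum>k. real k * prob_ds n k) \<longlonglongrightarrow> 3 / 2"
    using tendsto_moment_prob_ds(1)[of real] le_power2_add_one
      sums_unique[OF sums_index_ds_limit_law, symmetric]
    by simp
  then show "exp_ds \<longlonglongrightarrow> 3/2"
    by (simp add: exp_ds_eq_suminf[abs_def])
  have "(\<lambda>n. \<Sum>k. real k ^ 2 * prob_ds n k) \<longlonglongrightarrow> 33 / 4"
    using tendsto_moment_prob_ds(1)[of "\<lambda>k. real k ^ 2"]
      sums_unique[OF sums_index_square_ds_limit_law, symmetric]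
    by simp
  from tendsto_diff[OF this tendsto_power[OF mean, of 2]]
  show "var_ds \<longlonglongrightarrow> 6"
    by (simp add: var_ds_eq_suminf[abs_def] exp_ds_eq_suminf[symmetric] power2_eq_square)
qed

end
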